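(* Let $d\geq 3$ and let $U=(u_{ij})\in\mathcal{U}_d(\mathbb{C})$ be arbitrary. Suppose $M\in\mathbb{N}$ is such that every $V\in\mathcal{U}_d(\mathbb{C})$ can be written as $V=D_{2M}U^\dagger D_{2M-1}U\cdots D_2U^\dagger D_1U$ with $D_1,\dots,D_{2M}\in\mathcal{DU}_d(\mathbb{C})$ (i.e., generated by $N=2M$ alternated operations from $\mathcal{F}_A=\mathcal{DU}_d(\mathbb{C})$ and $\mathcal{F}_B=\{U^\dagger DU:D\in\mathcal{DU}_d(\mathbb{C})\}$). Then $$N=2M\geq\frac{2\log(d-1)}{\log\big((d-2)c_U+1\big)},\qquad\text{where}\quad c_U=\max_{a,b\in\{1,\dots,d\},\,a\neq b}\sum_{j=1}^d|\bar{u}_{ja}||u_{jb}|=\max_{a\neq b}\langle a|X_U^TX_U|b\rangle,$$ and $X_U$ is the matrix with entries $[X_U]_{ij}=|u_{ij}|$.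
   Context: $\mathcal{U}_d(\mathbb{C})$ denotes the group of $d\times d$ unitary matrices and $\mathcal{DU}_d(\mathbb{C})$ its subgroup of diagonal unitary matrices; $\{|i\rangle\}$ is the computational basis. *)

theory Defs
  imports "Jordan_Normal_Form.Schur_Decomposition"
begin

definition unitary_mat :: "nat \<Rightarrow> complex mat \<Rightarrow> bool" where
  "unitary_mat d U \<longleftrightarrow> U \<in> carrier_mat d d \<and> mat_adjoint U * U = 1\<^sub>m d"

definition diag_unitary_mat :: "nat \<Rightarrow> complex mat \<Rightarrow> bool" where
  "diag_unitary_mat d D \<longleftrightarrow> unitary_mat d D \<and> diagonal_mat D"

fun alt_prod :: "nat \<Rightarrow> complex mat \<Rightarrow> (nat \<Rightarrow> complex mat) \<Rightarrow> nat \<Rightarrow> complex mat" where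
  "alt_prod d U D 0 = 1\<^sub>m d"
| "alt_prod d U D (Suc k) =
     D (2 * k + 2) * mat_adjoint U * D (2 * k + 1) * U * alt_prod d U D k"

definition c_U :: "nat \<Rightarrow> complex mat \<Rightarrow> real" where
  "c_U d U = Max {(\<Sum>j<d. cmod (cnj (U $$ (j, a))) * cmod (U $$ (j, b))) | a b.
                   a < d \<and> b < d \<and> a \<noteq> b}"

end

theory Submission
  imports Defs
begin

text \<open>
  Write \<open>c = c_U d U\<close> and \<open>x = (d - 2) c + 1\<close>. Each factor \<open>H = D' U\<^sup>\<dagger> D U\<close> of the
  alternating product is unitary and satisfies \<open>|H\<^sub>j\<^sub>l| \<le> \<Sum>\<^sub>i |u\<^sub>i\<^sub>j| |u\<^sub>i\<^sub>l|\<close>, so its off-diagonal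
  entries are at most \<open>c\<close>. If the off-diagonal entries of a unitary \<open>Q\<close> are at most \<open>\<beta>\<close>,
  splitting \<open>(H Q)\<^sub>j\<^sub>b = \<Sum>\<^sub>l H\<^sub>j\<^sub>l Q\<^sub>l\<^sub>b\<close> into the terms \<open>l = j\<close>, \<open>l = b\<close> and the \<open>d - 2\<close> others bounds
  the off-diagonal entries of \<open>H Q\<close> by \<open>x \<beta> + c\<close>. Hence after \<open>M\<close> factors they are at most
  \<open>c (1 + x + \<dots> + x ^ (M - 1)) = (x ^ M - 1) / (d - 2)\<close>. The permutation matrix exchanging the
  first two basis vectors has an off-diagonal entry \<open>1\<close>, which forces \<open>d - 1 \<le> x ^ M\<close>.
\<close>

lemma dim_mat_adjoint [simp]:
  "dim_row (mat_adjoint A) = dim_col A" "dim_col (mat_adjoint A) = dim_row A"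
  by (simp_all add: mat_adjoint_def)

lemma index_mat_adjoint [simp]:
  "i < dim_col A \<Longrightarrow> j < dim_row A \<Longrightarrow> mat_adjoint A $$ (i, j) = conjugate (A $$ (j, i))"
  by (simp add: mat_adjoint_def mat_of_rows_index)

lemma mat_adjoint_adjoint [simp]: "mat_adjoint (mat_adjoint A) = A"
  by (rule eq_matI) auto

lemma mat_adjoint_one [simp]: "mat_adjoint (1\<^sub>m n :: complex mat) = 1\<^sub>m n"
  by (rule eq_matI) auto

lemma mat_adjoint_mult:
  assumes "A \<in> carrier_mat n m" "B \<in> carrier_mat m k"
  shows "mat_adjoint (A * B) = mat_adjoint B * mat_adjoint A"
  by (rule eq_matI) (use assms in \<open>auto simp: scalar_prod_def sum_conjugate conjugate_dist_mul mult.commute\<close>)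

lemma carrier_mat_adjoint: "A \<in> carrier_mat n m \<Longrightarrow> mat_adjoint A \<in> carrier_mat m n"
  by auto

lemma index_mult_mat_sum:
  assumes "A \<in> carrier_mat n m" "B \<in> carrier_mat m k" "i < n" "j < k"
  shows "(A * B) $$ (i, j) = (\<Sum>l<m. A $$ (i, l) * B $$ (l, j))"
  using assms by (auto simp: scalar_prod_def atLeast0LessThan intro!: sum.cong)

lemma unitary_mat_carrier: "unitary_mat d U \<Longrightarrow> U \<in> carrier_mat d d"
  by (simp add: unitary_mat_def)

lemma unitary_mat_mult_adjoint:
  assumes "unitary_mat d U" shows "U * mat_adjoint U = 1\<^sub>m d"
proof -
  have U: "U \<in> carrier_mat d d"
    using assms(1) by (rule unitary_mat_carrier)
  have "mat_adjoint U * U = 1\<^sub>m d"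
    using assms by (simp add: unitary_mat_def)
  then show ?thesis
    by (rule mat_mult_left_right_inverse[OF carrier_mat_adjoint[OF U] U])
qed

lemma unitary_mat_one: "unitary_mat d (1\<^sub>m d)"
  by (simp add: unitary_mat_def)

lemma unitary_mat_adjoint:
  assumes "unitary_mat d U" shows "unitary_mat d (mat_adjoint U)"
proof -
  have "U \<in> carrier_mat d d"
    using assms by (rule unitary_mat_carrier)
  then show ?thesis
    unfolding unitary_mat_def
    using carrier_mat_adjoint unitary_mat_mult_adjoint[OF assms] by simp
qed

lemma unitary_mat_mult:
  assumes "unitary_mat d A" "unitary_mat d B" shows "unitary_mat d (A * B)"
proof -
  have A: "A \<in> carrier_mat d d" and B: "B \<in> carrier_mat d d"
    using assms by (simp_all add: unitary_mat_carrier)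
  note A' = carrier_mat_adjoint[OF A] and B' = carrier_mat_adjoint[OF B]
  have "mat_adjoint (A * B) * (A * B) = mat_adjoint B * ((mat_adjoint A * A) * B)"
    unfolding mat_adjoint_mult[OF A B] assoc_mult_mat[OF B' A' mult_carrier_mat[OF A B]]
      assoc_mult_mat[OF A' A B] ..
  also have "\<dots> = 1\<^sub>m d"
    using assms B by (simp add: unitary_mat_def)
  finally show ?thesis
    using A B unfolding unitary_mat_def by simp
qed

lemma sum_norm_col_unitary_mat:
  assumes "unitary_mat d U" "j < d"
  shows "(\<Sum>i<d. (cmod (U $$ (i, j)))\<^sup>2) = 1"
proof -
  have U: "U \<in> carrier_mat d d"
    using assms(1) by (rule unitary_mat_carrier)
  have "complex_of_real (\<Sum>i<d. (cmod (U $$ (i, j)))\<^sup>2) = (\<Sum>i<d. cnj (U $$ (i, j)) * U $$ (i, j))"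
    by (simp add: complex_norm_square mult.commute del: of_real_power)
  also have "\<dots> = (\<Sum>i<d. mat_adjoint U $$ (j, i) * U $$ (i, j))"
    using U assms(2) by (intro sum.cong) auto
  also have "\<dots> = (mat_adjoint U * U) $$ (j, j)"
    by (rule index_mult_mat_sum[OF carrier_mat_adjoint[OF U] U assms(2) assms(2), symmetric])
  also have "\<dots> = 1"
    using assms by (simp add: unitary_mat_def)
  finally show ?thesis
    by (simp only: of_real_eq_1_iff)
qed

lemma norm_unitary_mat_index_le_1:
  assumes "unitary_mat d U" "i < d" "j < d"
  shows "cmod (U $$ (i, j)) \<le> 1"
proof -
  have "(cmod (U $$ (i, j)))\<^sup>2 \<le> (\<Sum>i<d. (cmod (U $$ (i, j)))\<^sup>2)"
    by (rule member_le_sum) (use assms in auto)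
  then show ?thesis
    using sum_norm_col_unitary_mat[OF assms(1,3)] by (simp add: abs_square_le_1)
qed

lemma index_diagonal_mat_mult:
  assumes "D \<in> carrier_mat n n" "diagonal_mat D" "A \<in> carrier_mat n m" "i < n" "j < m"
  shows "(D * A) $$ (i, j) = D $$ (i, i) * A $$ (i, j)"
proof -
  have "(D * A) $$ (i, j) = (\<Sum>l<n. D $$ (i, l) * A $$ (l, j))"
    by (rule index_mult_mat_sum[OF assms(1,3-5)])
  also have "\<dots> = (\<Sum>l<n. if l = i then D $$ (i, i) * A $$ (i, j) else 0)"
    by (rule sum.cong) (use assms in \<open>auto simp: diagonal_mat_def\<close>)
  finally show ?thesis
    using assms(4) by simp
qed

lemma index_mult_diagonal_mat:
  assumes "D \<in> carrier_mat m m" "diagonal_mat D" "A \<in> carrier_mat n m" "i < n" "j < m"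
  shows "(A * D) $$ (i, j) = A $$ (i, j) * D $$ (j, j)"
proof -
  have "(A * D) $$ (i, j) = (\<Sum>l<m. A $$ (i, l) * D $$ (l, j))"
    by (rule index_mult_mat_sum[OF assms(3,1,4,5)])
  also have "\<dots> = (\<Sum>l<m. if l = j then A $$ (i, j) * D $$ (j, j) else 0)"
    by (rule sum.cong) (use assms in \<open>auto simp: diagonal_mat_def\<close>)
  finally show ?thesis
    using assms(5) by simp
qed

lemma norm_diagonal_conjugation_index_le:
  assumes U: "U \<in> carrier_mat d d" and D: "diag_unitary_mat d D" and D': "diag_unitary_mat d D'"
    and j: "j < d" and l: "l < d"
  shows "cmod ((D' * mat_adjoint U * D * U) $$ (j, l))
    \<le> (\<Sum>i<d. cmod (U $$ (i, j)) * cmod (U $$ (i, l)))"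
proof -
  have D_carrier: "D \<in> carrier_mat d d" "D' \<in> carrier_mat d d"
    and D_diag: "diagonal_mat D" "diagonal_mat D'"
    and D_le_1: "\<And>i. i < d \<Longrightarrow> cmod (D $$ (i, i)) \<le> 1" "cmod (D' $$ (j, j)) \<le> 1"
    using D D' j norm_unitary_mat_index_le_1 by (auto simp: diag_unitary_mat_def unitary_mat_def)
  note U' = carrier_mat_adjoint[OF U]
  have "(D' * mat_adjoint U * D) $$ (j, i) = D' $$ (j, j) * cnj (U $$ (i, j)) * D $$ (i, i)"
    if "i < d" for i
    using that j U index_diagonal_mat_mult[OF D_carrier(2) D_diag(2) U' j that]
      index_mult_diagonal_mat[OF D_carrier(1) D_diag(1) mult_carrier_mat[OF D_carrier(2) U'] j that]
    by simp
  then have "(D' * mat_adjoint U * D * U) $$ (j, l)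
      = (\<Sum>i<d. D' $$ (j, j) * cnj (U $$ (i, j)) * D $$ (i, i) * U $$ (i, l))"
    using index_mult_mat_sum[OF mult_carrier_mat[OF mult_carrier_mat[OF D_carrier(2) U'] D_carrier(1)] U j l]
    by simp
  then have "cmod ((D' * mat_adjoint U * D * U) $$ (j, l))
      \<le> (\<Sum>i<d. cmod (D' $$ (j, j) * cnj (U $$ (i, j)) * D $$ (i, i) * U $$ (i, l)))"
    by (simp only: norm_sum)
  also have "\<dots> = (\<Sum>i<d. cmod (D' $$ (j, j)) * cmod (D $$ (i, i))
                            * (cmod (U $$ (i, j)) * cmod (U $$ (i, l))))"
    by (simp add: norm_mult mult_ac)
  also have "\<dots> \<le> (\<Sum>i<d. 1 * 1 * (cmod (U $$ (i, j)) * cmod (U $$ (i, l))))"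
    using D_le_1 by (intro sum_mono mult_right_mono mult_mono) auto
  finally show ?thesis
    by simp
qed

lemma norm_offdiag_mult_le:
  fixes H Q :: "complex mat"
  assumes H: "H \<in> carrier_mat d d" and Q: "Q \<in> carrier_mat d d"
    and H_diag: "\<And>l. l < d \<Longrightarrow> cmod (H $$ (l, l)) \<le> 1"
    and H_offdiag: "\<And>l l'. l < d \<Longrightarrow> l' < d \<Longrightarrow> l \<noteq> l' \<Longrightarrow> cmod (H $$ (l, l')) \<le> c"
    and Q_diag: "\<And>l. l < d \<Longrightarrow> cmod (Q $$ (l, l)) \<le> 1"
    and Q_offdiag: "\<And>l l'. l < d \<Longrightarrow> l' < d \<Longrightarrow> l \<noteq> l' \<Longrightarrow> cmod (Q $$ (l, l')) \<le> \<beta>"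
    and j: "j < d" and b: "b < d" and "j \<noteq> b"
  shows "cmod ((H * Q) $$ (j, b)) \<le> \<beta> + c + (real d - 2) * c * \<beta>"
proof -
  have "cmod ((H * Q) $$ (j, b)) \<le> (\<Sum>l<d. cmod (H $$ (j, l)) * cmod (Q $$ (l, b)))"
    unfolding index_mult_mat_sum[OF H Q j b] norm_mult[symmetric] by (rule norm_sum)
  also have "\<dots> \<le> (\<Sum>l<d. c * \<beta> + (if l = j then \<beta> - c * \<beta> else 0)
                              + (if l = b then c - c * \<beta> else 0))"
  proof (rule sum_mono)
    fix l assume l: "l \<in> {..<d}"
    have "0 \<le> c"
      using H_offdiag[OF j b \<open>j \<noteq> b\<close>] norm_ge_zero order_trans by blast
    consider "l = j" | "l = b" | "l \<noteq> j" "l \<noteq> b" by blast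
    then show "cmod (H $$ (j, l)) * cmod (Q $$ (l, b)) \<le> c * \<beta> + (if l = j then \<beta> - c * \<beta> else 0)
                              + (if l = b then c - c * \<beta> else 0)"
    proof cases
      case 1
      then have "cmod (H $$ (j, l)) * cmod (Q $$ (l, b)) \<le> 1 * \<beta>"
        using H_diag Q_offdiag j b \<open>j \<noteq> b\<close> by (intro mult_mono) auto
      then show ?thesis using 1 \<open>j \<noteq> b\<close> by simp
    next
      case 2
      then have "cmod (H $$ (j, l)) * cmod (Q $$ (l, b)) \<le> c * 1"
        using H_offdiag[of j b] Q_diag \<open>0 \<le> c\<close> j b \<open>j \<noteq> b\<close> by (intro mult_mono) auto
      then show ?thesis using 2 \<open>j \<noteq> b\<close> by simp
    next
      case 3
      then have "cmod (H $$ (j, l)) * cmod (Q $$ (l, b)) \<le> c * \<beta>"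
        using H_offdiag[of j l] Q_offdiag \<open>0 \<le> c\<close> j b l by (intro mult_mono) auto
      then show ?thesis using 3 by simp
    qed
  qed
  also have "\<dots> = \<beta> + c + (real d - 2) * c * \<beta>"
    using j b by (simp add: sum.distrib algebra_simps)
  finally show ?thesis .
qed

lemma sum_cmod_mult_le_c_U:
  assumes "a < d" "b < d" "a \<noteq> b"
  shows "(\<Sum>j<d. cmod (U $$ (j, a)) * cmod (U $$ (j, b))) \<le> c_U d U"
proof -
  let ?f = "\<lambda>a b. \<Sum>j<d. cmod (cnj (U $$ (j, a))) * cmod (U $$ (j, b))"
  let ?S = "{?f a b | a b. a < d \<and> b < d \<and> a \<noteq> b}"
  have "?S \<subseteq> case_prod ?f ` ({..<d} \<times> {..<d})"
    by auto
  then have "finite ?S"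
    by (rule finite_subset) simp
  moreover have "?f a b \<in> ?S"
    using assms by blast
  ultimately show ?thesis
    unfolding c_U_def by (simp add: Max_ge)
qed

lemma c_U_nonneg:
  assumes "2 \<le> d" shows "0 \<le> c_U d U"
proof -
  have "0 \<le> (\<Sum>j<d. cmod (U $$ (j, 0)) * cmod (U $$ (j, 1)))"
    by (simp add: sum_nonneg)
  also have "\<dots> \<le> c_U d U"
    using assms by (intro sum_cmod_mult_le_c_U) auto
  finally show ?thesis .
qed

lemma unitary_diagonal_conjugation:
  assumes "unitary_mat d U" "diag_unitary_mat d D" "diag_unitary_mat d D'"
  shows "unitary_mat d (D' * mat_adjoint U * D * U)"
  using assms by (simp add: diag_unitary_mat_def unitary_mat_mult unitary_mat_adjoint)

lemma unitary_alt_prod: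
  assumes "unitary_mat d U" "\<forall>i\<in>{1..2*k}. diag_unitary_mat d (D i)"
  shows "unitary_mat d (alt_prod d U D k)"
  using assms(2)
proof (induction k)
  case 0
  show ?case
    by (simp add: unitary_mat_one)
next
  case (Suc k)
  then have "diag_unitary_mat d (D (2 * k + 1))" "diag_unitary_mat d (D (2 * k + 2))"
    "unitary_mat d (alt_prod d U D k)"
    by auto
  with assms(1) show ?case
    by (simp add: unitary_diagonal_conjugation unitary_mat_mult)
qed

lemma norm_alt_prod_offdiag_le:
  assumes U: "unitary_mat d U" and "\<forall>i\<in>{1..2*k}. diag_unitary_mat d (D i)"
    and "j < d" "b < d" "j \<noteq> b"
  shows "cmod (alt_prod d U D k $$ (j, b)) \<le> c_U d U * (\<Sum>i<k. ((real d - 2) * c_U d U + 1) ^ i)"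
  using assms(2-)
proof (induction k arbitrary: j b)
  case 0
  then show ?case
    by simp
next
  case (Suc k)
  let ?c = "c_U d U" and ?x = "(real d - 2) * c_U d U + 1"
  let ?H = "D (2 * k + 2) * mat_adjoint U * D (2 * k + 1) * U" and ?Q = "alt_prod d U D k"
  have D: "diag_unitary_mat d (D (2 * k + 1))" "diag_unitary_mat d (D (2 * k + 2))"
    and D_prefix: "\<forall>i\<in>{1..2*k}. diag_unitary_mat d (D i)"
    using Suc.prems(1) by auto
  have H: "unitary_mat d ?H"
    using unitary_diagonal_conjugation[OF U D] .
  have Q: "unitary_mat d ?Q"
    using unitary_alt_prod[OF U D_prefix] .
  have H_offdiag: "cmod (?H $$ (l, l')) \<le> ?c" if "l < d" "l' < d" "l \<noteq> l'" for l l'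
    using norm_diagonal_conjugation_index_le[OF unitary_mat_carrier[OF U] D that(1,2)]
      sum_cmod_mult_le_c_U[OF that, of U] by linarith
  have "cmod ((?H * ?Q) $$ (j, b)) \<le> ?c * (\<Sum>i<k. ?x ^ i) + ?c + (real d - 2) * ?c * (?c * (\<Sum>i<k. ?x ^ i))"
    using H Q H_offdiag Suc.prems Suc.IH[OF D_prefix]
    by (intro norm_offdiag_mult_le) (auto simp: unitary_mat_carrier norm_unitary_mat_index_le_1)
  also have "\<dots> = ?c * (1 + ?x * (\<Sum>i<k. ?x ^ i))"
    by (simp add: algebra_simps)
  also have "\<dots> = ?c * (\<Sum>i<Suc k. ?x ^ i)"
    unfolding sum.lessThan_Suc_shift by (simp add: sum_distrib_left)
  finally show ?case
    by simp
qed

definition perm_mat :: "nat \<Rightarrow> (nat \<Rightarrow> nat) \<Rightarrow> complex mat" where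
  "perm_mat d p = mat d d (\<lambda>(i, j). if i = p j then 1 else 0)"

lemma unitary_perm_mat:
  assumes p: "p permutes {..<d}"
  shows "unitary_mat d (perm_mat d p)"
proof -
  have P: "perm_mat d p \<in> carrier_mat d d"
    by (simp add: perm_mat_def)
  have "mat_adjoint (perm_mat d p) * perm_mat d p = 1\<^sub>m d"
  proof (rule eq_matI)
    fix i j assume "i < dim_row (1\<^sub>m d)" "j < dim_col (1\<^sub>m d)"
    then have i: "i < d" and j: "j < d"
      by simp_all
    have "(mat_adjoint (perm_mat d p) * perm_mat d p) $$ (i, j)
        = (\<Sum>l<d. mat_adjoint (perm_mat d p) $$ (i, l) * perm_mat d p $$ (l, j))"
      by (rule index_mult_mat_sum[OF carrier_mat_adjoint[OF P] P i j])
    also have "\<dots> = (\<Sum>l<d. if l = p i then (if p i = p j then 1 else 0) else 0)"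
      using i j by (intro sum.cong) (auto simp: perm_mat_def)
    also have "\<dots> = 1\<^sub>m d $$ (i, j)"
      using i j permutes_in_image[OF p] permutes_inj[OF p] by (auto simp: inj_eq)
    finally show "(mat_adjoint (perm_mat d p) * perm_mat d p) $$ (i, j) = 1\<^sub>m d $$ (i, j)" .
  qed (simp_all add: perm_mat_def)
  with P show ?thesis
    by (simp add: unitary_mat_def)
qed

lemma ln_div_ln_le_of_le_power:
  fixes a x :: real
  assumes "1 < a" "0 < x" "a \<le> x ^ n"
  shows "ln a / ln x \<le> n"
proof -
  have "1 < x"
    using assms power_le_one[of x n] by (cases "x \<le> 1") auto
  then have "0 < ln x"
    by simp
  have "ln a \<le> ln (x ^ n)"
    using assms by simp
  also have "\<dots> = n * ln x"
    using assms(2) by (simp add: ln_realpow)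
  finally show ?thesis
    using \<open>0 < ln x\<close> by (simp add: divide_le_eq)
qed

theorem proposition12:
  fixes d M :: nat and U :: "complex mat"
  assumes "d \<ge> 3"
    and "unitary_mat d U"
    and "\<forall>V. unitary_mat d V \<longrightarrow>
           (\<exists>D. (\<forall>i\<in>{1..2*M}. diag_unitary_mat d (D i)) \<and> V = alt_prod d U D M)"
  shows "real (2 * M) \<ge> 2 * ln (real d - 1) / ln ((real d - 2) * c_U d U + 1)"
proof -
  let ?c = "c_U d U" and ?x = "(real d - 2) * c_U d U + 1"
  define V where "V = perm_mat d (Transposition.transpose 0 1)"
  have "unitary_mat d V"
    unfolding V_def using assms(1) by (intro unitary_perm_mat permutes_swap_id) auto
  then obtain D where D: "\<forall>i\<in>{1..2*M}. diag_unitary_mat d (D i)" and "V = alt_prod d U D M"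
    using assms(3) by blast
  moreover have "V $$ (1, 0) = 1"
    using assms(1) by (simp add: V_def perm_mat_def)
  ultimately have "1 \<le> ?c * (\<Sum>i<M. ?x ^ i)"
    using norm_alt_prod_offdiag_le[OF assms(2) D, of 1 0] assms(1) by simp
  then have "real d - 2 \<le> (?x - 1) * (\<Sum>i<M. ?x ^ i)"
    using assms(1) mult_left_mono[of 1 "?c * (\<Sum>i<M. ?x ^ i)" "real d - 2"] by (simp add: mult_ac)
  then have "real d - 1 \<le> ?x ^ M"
    using power_diff_1_eq[of ?x M] by simp
  moreover have "0 < ?x"
    using assms(1) c_U_nonneg[of d U] by (simp add: add_nonneg_pos)
  ultimately have "ln (real d - 1) / ln ?x \<le> M"
    using assms(1) by (intro ln_div_ln_le_of_le_power) auto
  then show ?thesis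
    by simp
qed

end
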